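(* Let $k$ be algebraically closed of characteristic $\neq 2,3$. For every $a\in k\setminus\{0,1\}$, $\langle a\rangle=-\,a\star\langle a^{-1}\rangle$ in $TB_2(k)$.
   Context: $R$ is the local ring of ${\mathbb A}^1_k=\mathrm{Spec}\,k[t]$ at $t=0$, $\mathfrak m=tR$. $\langle a,b\rangle$ are Dennis–Stein (pointy bracket) symbols in the relative group $K_2(R,\mathfrak m^2)$, defined for $(a,b)\in(R\times\mathfrak m^2)\cup(\mathfrak m^2\times R)$. $\mathcal C$ is the subgroup generated by the $\langle a,b\rangle$ with $a\in\mathfrak m^2$, $b\in k$; $TB_2(k):=K_2(R,\mathfrak m^2)/\mathcal C$. For $c\in k^\times$ and $x\in TB_2(k)$, $c\star x$ is the image of $x$ under the automorphism of $R$ induced by $t\mapsto ct$. For $a\in k\setminus\{0,1\}$, $\langle a\rangle:=\big\langle t^2,\tfrac{a(1-a)}{t-1}\big\rangle\in TB_2(k)$. *)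

theory Defs
  imports "HOL-Computational_Algebra.Polynomial_FPS"
begin

text \<open>The local ring R of the affine line at t = 0, realised inside k[[t]]:
  fractions p/q of polynomials with q(0) nonzero.\<close>
definition locR :: "'k::field fps set" where
  "locR = {f. \<exists>p q. poly q 0 \<noteq> 0 \<and> f = fps_of_poly p * inverse (fps_of_poly q)}"

definition msq :: "'k::field fps set" where
  "msq = {fps_X ^ 2 * g | g. g \<in> locR}"

definition ds_dom :: "'k::field fps \<Rightarrow> 'k fps \<Rightarrow> bool" where
  "ds_dom a b \<longleftrightarrow> (a \<in> locR \<and> b \<in> msq) \<or> (a \<in> msq \<and> b \<in> locR)"

text \<open>Keune's presentation of K_2(R,I) for I inside the Jacobson radical:
  a map s satisfying (D1)-(D3) is exactly a homomorphism out of K_2(R, m^2)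
  evaluated on the symbols.\<close>
definition DS_map :: "('k::field fps \<Rightarrow> 'k fps \<Rightarrow> 'g::ab_group_add) \<Rightarrow> bool" where
  "DS_map s \<longleftrightarrow>
     (\<forall>a b. ds_dom a b \<longrightarrow> s a b = - s b a) \<and>
     (\<forall>a\<in>locR. \<forall>b\<in>locR. \<forall>c\<in>locR. (a \<in> msq \<or> (b \<in> msq \<and> c \<in> msq)) \<longrightarrow>
         s a b + s a c = s a (b + c - a * b * c)) \<and>
     (\<forall>a\<in>locR. \<forall>b\<in>locR. \<forall>c\<in>locR. (a \<in> msq \<or> b \<in> msq \<or> c \<in> msq) \<longrightarrow>
         s a (b * c) = s (a * b) c + s (a * c) b)"

text \<open>Maps out of TB_2(k) = K_2(R,m^2)/C: additionally kill the symbols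
  with a in m^2 and b a constant in k.\<close>
definition TB2_map :: "('k::field fps \<Rightarrow> 'k fps \<Rightarrow> 'g::ab_group_add) \<Rightarrow> bool" where
  "TB2_map s \<longleftrightarrow> DS_map s \<and> (\<forall>a\<in>msq. \<forall>b. s a (fps_const b) = 0)"

definition tscale :: "'k::field \<Rightarrow> 'k fps \<Rightarrow> 'k fps" where
  "tscale c f = Abs_fps (\<lambda>n. c ^ n * fps_nth f n)"

text \<open>The pair (t^2, a(1-a)/(t-1)) underlying the element <a> of TB_2(k).\<close>
definition angle_fst :: "'k::field fps" where
  "angle_fst = fps_X ^ 2"

definition angle_snd :: "'k::field \<Rightarrow> 'k fps" where
  "angle_snd a = fps_const (a * (1 - a)) * inverse (fps_X - 1)"

definition alg_closed_field :: "'k::field itself \<Rightarrow> bool" where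
  "alg_closed_field _ \<longleftrightarrow> (\<forall>p :: 'k poly. degree p \<ge> 1 \<longrightarrow> (\<exists>x. poly p x = 0))"

end

theory Submission
  imports Defs
begin

text \<open>Write A = a(1-a)/(t-1) and B = (a-1)/(at-1). Rescaling gives
  a\<star><a^{-1}> = <a^2 t^2, a^{-2} B>, and relation (D3) together with the vanishing
  of <x, const> moves the constant a^2 across, so a\<star><a^{-1}> = <t^2, B>.
  By (D2), <t^2, A> + <t^2, B> = <t^2, A + B - t^2 A B>, and the second entry
  is the constant (1-a)^2, so the sum vanishes in TB_2(k).\<close>

unbundle fps_syntax

lemma tscale_mult: "tscale c (f * g) = tscale c f * tscale c g"
proof -
  have "c ^ n * (\<Sum>i=0..n. f $ i * g $ (n - i)) =
        (\<Sum>i=0..n. c ^ i * f $ i * (c ^ (n - i) * g $ (n - i)))" for n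
    unfolding sum_distrib_left
  proof (rule sum.cong)
    fix i assume "i \<in> {0..n}"
    then have "c ^ n = c ^ i * c ^ (n - i)" by (simp add: power_add[symmetric])
    then show "c ^ n * (f $ i * g $ (n - i)) = c ^ i * f $ i * (c ^ (n - i) * g $ (n - i))"
      by (simp add: algebra_simps)
  qed simp
  then show ?thesis unfolding tscale_def by (simp add: fps_eq_iff fps_mult_nth)
qed

lemma tscale_const: "tscale c (fps_const b) = fps_const b"
  unfolding tscale_def by (simp add: fps_eq_iff)

lemma tscale_one: "tscale c 1 = 1"
  unfolding tscale_def by (simp add: fps_eq_iff)

lemma tscale_diff: "tscale c (f - g) = tscale c f - tscale c g"
  unfolding tscale_def by (simp add: fps_eq_iff algebra_simps)

lemma tscale_X_power: "tscale c (fps_X ^ n) = fps_const (c ^ n) * fps_X ^ n"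
  unfolding tscale_def by (simp add: fps_eq_iff)

lemma tscale_inverse:
  assumes "f $ 0 \<noteq> 0"
  shows "tscale c (inverse f) = inverse (tscale c f)"
proof -
  have "tscale c f * tscale c (inverse f) = 1"
    using assms by (simp add: tscale_mult[symmetric] inverse_mult_eq_1' tscale_one)
  then show ?thesis by (rule fps_inverse_unique[symmetric])
qed

lemma tscale_angle_fst: "tscale c angle_fst = angle_fst * fps_const (c ^ 2)"
  unfolding angle_fst_def by (simp add: tscale_X_power mult.commute)

lemma tscale_angle_snd:
  "tscale c (angle_snd b) = fps_const (b * (1 - b)) * inverse (fps_const c * fps_X - 1)"
proof -
  have "tscale c (fps_X - 1) = fps_const c * fps_X - 1"
    using tscale_X_power[of c 1] by (simp add: tscale_diff tscale_one)
  moreover have "(fps_X - 1 :: 'a fps) $ 0 \<noteq> 0" by simp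
  ultimately show ?thesis
    unfolding angle_snd_def by (simp add: tscale_mult tscale_const tscale_inverse)
qed

lemma fps_of_poly_in_locR: "fps_of_poly p \<in> locR"
  unfolding locR_def mem_Collect_eq by (rule exI[of _ p], rule exI[of _ 1]) simp

lemma fps_const_in_locR: "fps_const c \<in> locR"
  using fps_of_poly_in_locR[of "[:c:]"] by (simp add: fps_of_poly_const)

lemma inverse_linear_in_locR: "inverse (fps_const c * fps_X - 1) \<in> locR"
proof -
  have linear: "fps_of_poly [:-1, c:] = fps_const c * fps_X - (1 :: 'a fps)"
    by (simp add: fps_of_poly_pCons fps_of_poly_const algebra_simps fps_const_neg[symmetric])
  show ?thesis
    unfolding locR_def mem_Collect_eq
    by (rule exI[of _ 1], rule exI[of _ "[:-1, c:]"]) (simp add: linear)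
qed

lemma locR_mult:
  assumes "f \<in> locR" "g \<in> locR"
  shows "f * g \<in> locR"
proof -
  obtain p q p' q' where "poly q 0 \<noteq> 0" "f = fps_of_poly p * inverse (fps_of_poly q)"
    and "poly q' 0 \<noteq> 0" "g = fps_of_poly p' * inverse (fps_of_poly q')"
    using assms unfolding locR_def by blast
  then have "poly (q * q') 0 \<noteq> 0"
    and "f * g = fps_of_poly (p * p') * inverse (fps_of_poly (q * q'))"
    by (simp_all add: fps_of_poly_mult fps_inverse_mult mult_ac)
  then show ?thesis unfolding locR_def by blast
qed

lemma msq_subset_locR: "msq \<subseteq> locR"
  unfolding msq_def
  using locR_mult fps_of_poly_in_locR[of "monom 1 2"] by (auto simp: fps_of_poly_monom')

lemma msq_mult_locR:
  assumes "x \<in> msq" "b \<in> locR"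
  shows "x * b \<in> msq"
proof -
  obtain g where "g \<in> locR" "x = fps_X ^ 2 * g" using assms(1) unfolding msq_def by blast
  then show ?thesis
    using locR_mult[OF _ assms(2)] unfolding msq_def by (auto simp: mult.assoc)
qed

lemma angle_fst_in_msq: "angle_fst \<in> msq"
  unfolding angle_fst_def msq_def using fps_const_in_locR[of 1] by force

lemma angle_snd_in_locR: "angle_snd a \<in> locR"
  using locR_mult[OF fps_const_in_locR inverse_linear_in_locR, of _ 1]
  unfolding angle_snd_def by simp

context
  fixes s :: "'k::field fps \<Rightarrow> 'k fps \<Rightarrow> 'g::ab_group_add"
  assumes s: "TB2_map s"
begin

lemma TB2_map_add:
  assumes "x \<in> msq" "b \<in> locR" "c \<in> locR"
  shows "s x b + s x c = s x (b + c - x * b * c)"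
  using s assms msq_subset_locR unfolding TB2_map_def DS_map_def by blast

lemma TB2_map_const:
  assumes "x \<in> msq"
  shows "s x (fps_const c) = 0"
  using s assms unfolding TB2_map_def by blast

lemma TB2_map_move_const:
  assumes "x \<in> msq" "b \<in> locR"
  shows "s (x * fps_const c) b = s x (fps_const c * b)"
proof -
  have "s x (fps_const c * b) = s (x * fps_const c) b + s (x * b) (fps_const c)"
    using s assms msq_subset_locR fps_const_in_locR
    unfolding TB2_map_def DS_map_def by blast
  moreover have "s (x * b) (fps_const c) = 0"
    using assms by (intro TB2_map_const msq_mult_locR)
  ultimately show ?thesis by simp
qed

lemma TB2_map_eq_neg:
  assumes "x \<in> msq" "b \<in> locR" "c \<in> locR" "b + c - x * b * c = fps_const d"
  shows "s x b = - s x c"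
  using TB2_map_add[OF assms(1-3)] TB2_map_const[OF assms(1)] assms(4)
  by (simp add: eq_neg_iff_add_eq_0)

end

lemma circle_identity_of_inverses:
  fixes \<alpha> X P Q :: "'a::comm_ring_1"
  assumes P: "(X - 1) * P = 1" and Q: "(\<alpha> * X - 1) * Q = 1"
  shows "\<alpha> * (1 - \<alpha>) * P + (\<alpha> - 1) * Q - X ^ 2 * (\<alpha> * (1 - \<alpha>) * P) * ((\<alpha> - 1) * Q)
    = (1 - \<alpha>) ^ 2"
proof -
  have "\<alpha> * (1 - \<alpha>) * P + (\<alpha> - 1) * Q - X ^ 2 * (\<alpha> * (1 - \<alpha>) * P) * ((\<alpha> - 1) * Q)
      = \<alpha> * (1 - \<alpha>) * P * ((\<alpha> * X - 1) * Q) + (\<alpha> - 1) * Q * ((X - 1) * P)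
        - X ^ 2 * (\<alpha> * (1 - \<alpha>) * P) * ((\<alpha> - 1) * Q)"
    using P Q by simp
  also have "\<dots> = (1 - \<alpha>) ^ 2 * ((X - 1) * P) * ((\<alpha> * X - 1) * Q)"
    by (simp add: algebra_simps power2_eq_square)
  also have "\<dots> = (1 - \<alpha>) ^ 2"
    using P Q by simp
  finally show ?thesis .
qed

lemma angle_snd_circle_identity:
  fixes a :: "'k::field"
  defines "B \<equiv> fps_const (a - 1) * inverse (fps_const a * fps_X - 1)"
  shows "angle_snd a + B - angle_fst * angle_snd a * B = fps_const ((1 - a) ^ 2)"
proof -
  have P: "(fps_X - 1) * inverse (fps_X - 1 :: 'k fps) = 1"
    and Q: "(fps_const a * fps_X - 1) * inverse (fps_const a * fps_X - 1 :: 'k fps) = 1"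
    by (simp_all add: inverse_mult_eq_1')
  have one_minus: "1 - fps_const a = fps_const (1 - a)"
    by (simp add: fps_eq_iff)
  have const_forms: "fps_const (a * (1 - a)) = fps_const a * (1 - fps_const a)"
    "fps_const (a - 1) = fps_const a - 1"
    "fps_const ((1 - a) ^ 2) = (1 - fps_const a) ^ 2"
    by (simp_all add: one_minus fps_eq_iff)
  show ?thesis
    unfolding B_def angle_snd_def angle_fst_def const_forms
    by (rule circle_identity_of_inverses[OF P Q])
qed

theorem lemma3p6:
  fixes a :: "'k::field" and s :: "'k fps \<Rightarrow> 'k fps \<Rightarrow> 'g::ab_group_add"
  assumes "alg_closed_field TYPE('k)"
    and "(2::'k) \<noteq> 0" and "(3::'k) \<noteq> 0"
    and "a \<noteq> 0" and "a \<noteq> 1"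
    and "TB2_map s"
  shows "s angle_fst (angle_snd a)
         = - s (tscale a angle_fst) (tscale a (angle_snd (inverse a)))"
proof -
  define I where "I = inverse (fps_const a * fps_X - 1 :: 'k fps)"
  define B where "B = fps_const (a - 1) * I"
  define B' where "B' = fps_const (inverse a * (1 - inverse a)) * I"
  have I_in_locR: "I \<in> locR"
    unfolding I_def by (rule inverse_linear_in_locR)
  have "a ^ 2 * (inverse a * (1 - inverse a)) = a - 1"
    using \<open>a \<noteq> 0\<close> by (simp add: field_simps power2_eq_square)
  then have "fps_const (a ^ 2) * B' = B"
    unfolding B_def B'_def by (simp only: mult.assoc[symmetric] fps_const_mult)
  moreover have "B' \<in> locR"
    unfolding B'_def using I_in_locR by (intro locR_mult fps_const_in_locR)
  ultimately have "s (tscale a angle_fst) (tscale a (angle_snd (inverse a))) = s angle_fst B"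
    unfolding tscale_angle_fst tscale_angle_snd I_def[symmetric] B'_def[symmetric]
    by (simp add: TB2_map_move_const[OF \<open>TB2_map s\<close> angle_fst_in_msq])
  moreover have "s angle_fst (angle_snd a) = - s angle_fst B"
  proof (rule TB2_map_eq_neg[OF \<open>TB2_map s\<close> angle_fst_in_msq angle_snd_in_locR])
    show "B \<in> locR"
      unfolding B_def using I_in_locR by (intro locR_mult fps_const_in_locR)
    show "angle_snd a + B - angle_fst * angle_snd a * B = fps_const ((1 - a) ^ 2)"
      unfolding B_def I_def by (rule angle_snd_circle_identity)
  qed
  ultimately show ?thesis by simp
qed

end
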